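(* Let $\mathcal{I}$ be finite and, for $\mathbf{Q}\in B(\mathcal{L})$, let $p^{MU}(\mathbf{Q})=\log|\mathcal{P}_{\mathbf{Q}}|$ (the min-entropy information gain under the uniform distribution on $\mathcal{I}$). Then $p^{MU}$ is an arbitrage-free instance-independent pricing function.
   Context: $\mathcal{I}$ is a set of database instances; queries are deterministic functions on $\mathcal{I}$; a query bundle is a finite tuple of queries from a language $\mathcal{L}$, evaluated componentwise; $B(\mathcal{L})$ is the set of bundles, closed under concatenation $\mathbf{Q}_1,\mathbf{Q}_2$. $\mathcal{P}_{\mathbf{Q}}$ is the partition of $\mathcal{I}$ into the equivalence classes of $D\sim D'\iff\mathbf{Q}(D)=\mathbf{Q}(D')$, and $|\mathcal{P}_{\mathbf{Q}}|$ is its number of blocks. An instance-independent pricing function $p$ is arbitrage-free if (i) whenever for all $D',D''\in\mathcal{I}$, $\mathbf{Q}_2(D')=\mathbf{Q}_2(D'')$ implies $\mathbf{Q}_1(D')=\mathbf{Q}_1(D'')$, we have $p(\mathbf{Q}_2)\ge p(\mathbf{Q}_1)$; and (ii) $p(\mathbf{Q}_1,\mathbf{Q}_2)\le p(\mathbf{Q}_1)+p(\mathbf{Q}_2)$ for all bundles. *)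

theory Defs
  imports Complex_Main
begin

text \<open>A query language L is a set of queries; a bundle is a finite tuple (list)
  of queries from L, i.e. an element of lists L; concatenation is append.\<close>

definition bundle_eval :: "('i \<Rightarrow> 'o) list \<Rightarrow> 'i \<Rightarrow> 'o list" where
  "bundle_eval Q D = map (\<lambda>q. q D) Q"

definition query_partition :: "'i set \<Rightarrow> ('i \<Rightarrow> 'o) list \<Rightarrow> 'i set set" where
  "query_partition I Q =
     I // {(D, D'). D \<in> I \<and> D' \<in> I \<and> bundle_eval Q D = bundle_eval Q D'}"

text \<open>An instance-independent pricing function assigns a price to each bundle.
  Arbitrage-freeness: (i) information-monotonicity, (ii) subadditivity.\<close>
definition arbitrage_free ::
  "'i set \<Rightarrow> ('i \<Rightarrow> 'o) set \<Rightarrow> (('i \<Rightarrow> 'o) list \<Rightarrow> real) \<Rightarrow> bool" where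
  "arbitrage_free I L p \<longleftrightarrow>
     (\<forall>Q1\<in>lists L. \<forall>Q2\<in>lists L.
        (\<forall>D'\<in>I. \<forall>D''\<in>I. bundle_eval Q2 D' = bundle_eval Q2 D''
                            \<longrightarrow> bundle_eval Q1 D' = bundle_eval Q1 D'')
        \<longrightarrow> p Q2 \<ge> p Q1) \<and>
     (\<forall>Q1\<in>lists L. \<forall>Q2\<in>lists L. p (Q1 @ Q2) \<le> p Q1 + p Q2)"

definition p_MU :: "'i set \<Rightarrow> ('i \<Rightarrow> 'o) list \<Rightarrow> real" where
  "p_MU I Q = log 2 (real (card (query_partition I Q)))"

end

theory Submission
  imports Defs
begin

text \<open>The blocks of \<open>\<P>\<^sub>Q\<close> correspond to the answers \<open>Q(D)\<close> actually taken, so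
  \<open>|\<P>\<^sub>Q| = |Q(\<I>)|\<close>. If \<open>Q\<^sub>2\<close> determines \<open>Q\<^sub>1\<close>, then \<open>Q\<^sub>1(\<I>)\<close> is an image of
  \<open>Q\<^sub>2(\<I>)\<close>, giving monotonicity; and the answer to \<open>Q\<^sub>1,Q\<^sub>2\<close> is the pair of
  answers, so \<open>|Q\<^sub>1Q\<^sub>2(\<I>)| \<le> |Q\<^sub>1(\<I>)| \<cdot> |Q\<^sub>2(\<I>)|\<close> and the logarithm turns this
  into subadditivity. Both cardinalities are positive unless \<open>\<I> = {}\<close>, where every
  price is the junk value \<open>log 2 0 = 0\<close>.\<close>

lemma card_quotient_kernel:
  "card (A // {(x, y). x \<in> A \<and> y \<in> A \<and> f x = f y}) = card (f ` A)"
proof -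
  let ?R = "{(x, y). x \<in> A \<and> y \<in> A \<and> f x = f y}"
  define fibre where "fibre v = {x \<in> A. f x = v}" for v
  have "A // ?R = (\<lambda>x. ?R `` {x}) ` A"
    unfolding quotient_def by blast
  also have "\<dots> = fibre ` f ` A"
    unfolding image_image by (rule image_cong) (auto simp: fibre_def)
  finally have "A // ?R = fibre ` f ` A" .
  moreover have "inj_on fibre (f ` A)"
    by (rule inj_onI) (auto simp: fibre_def set_eq_iff)
  ultimately show ?thesis
    using card_image by metis
qed

lemma card_image_le_if_determined:
  assumes "finite A"
    and "\<And>x y. x \<in> A \<Longrightarrow> y \<in> A \<Longrightarrow> h x = h y \<Longrightarrow> f x = f y"
  shows "card (f ` A) \<le> card (h ` A)"
proof -
  have "f x = f (inv_into A h (h x))" if "x \<in> A" for x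
  proof (rule assms(2))
    show "inv_into A h (h x) \<in> A" "h x = h (inv_into A h (h x))"
      using that by (simp_all add: inv_into_into f_inv_into_f)
  qed fact
  then have "f ` A = (f \<circ> inv_into A h) ` h ` A"
    unfolding image_image comp_def by (rule image_cong[OF refl])
  also have "card \<dots> \<le> card (h ` A)"
    using assms(1) by (intro card_image_le finite_imageI)
  finally show ?thesis .
qed

lemma card_image_combine_le:
  assumes "finite A"
  shows "card ((\<lambda>x. c (f x) (g x)) ` A) \<le> card (f ` A) * card (g ` A)"
proof -
  have "card ((\<lambda>x. c (f x) (g x)) ` A) \<le> card (case_prod c ` (f ` A \<times> g ` A))"
    using assms by (intro card_mono) auto
  also have "\<dots> \<le> card (f ` A \<times> g ` A)"
    using assms by (intro card_image_le) simp
  finally show ?thesis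
    by (simp add: card_cartesian_product)
qed

lemma bundle_eval_append:
  "bundle_eval (Q1 @ Q2) D = bundle_eval Q1 D @ bundle_eval Q2 D"
  by (simp add: bundle_eval_def)

lemma p_MU_eq_log_card_answers:
  "p_MU I Q = log 2 (card (bundle_eval Q ` I))"
  by (simp add: p_MU_def query_partition_def card_quotient_kernel)

lemma card_answers_pos:
  "finite I \<Longrightarrow> I \<noteq> {} \<Longrightarrow> 0 < card (bundle_eval Q ` I)"
  by (simp add: card_gt_0_iff)

lemma p_MU_mono:
  assumes "finite I"
    and "\<forall>D'\<in>I. \<forall>D''\<in>I. bundle_eval Q2 D' = bundle_eval Q2 D''
                          \<longrightarrow> bundle_eval Q1 D' = bundle_eval Q1 D''"
  shows "p_MU I Q1 \<le> p_MU I Q2"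
proof (cases "I = {}")
  case False
  have "card (bundle_eval Q1 ` I) \<le> card (bundle_eval Q2 ` I)"
    using assms(2) by (intro card_image_le_if_determined[OF assms(1)]) blast
  then show ?thesis
    using card_answers_pos[OF assms(1) False, of Q1]
    by (simp add: p_MU_eq_log_card_answers log_le_cancel_iff)
qed (simp add: p_MU_eq_log_card_answers log_def)

lemma p_MU_subadditive:
  fixes Q1 Q2 :: "('i \<Rightarrow> 'o) list"
  assumes "finite I"
  shows "p_MU I (Q1 @ Q2) \<le> p_MU I Q1 + p_MU I Q2"
proof (cases "I = {}")
  case False
  let ?n = "\<lambda>Q. real (card (bundle_eval Q ` I))"
  have pos: "0 < ?n Q" for Q :: "('i \<Rightarrow> 'o) list"
    using assms False card_answers_pos[of I] by simp
  have "?n (Q1 @ Q2) \<le> ?n Q1 * ?n Q2"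
    unfolding bundle_eval_append of_nat_mult[symmetric] of_nat_le_iff
    using assms by (rule card_image_combine_le)
  then have "log 2 (?n (Q1 @ Q2)) \<le> log 2 (?n Q1 * ?n Q2)"
    using pos by (simp add: log_le_cancel_iff)
  then show ?thesis
    using pos by (simp add: p_MU_eq_log_card_answers log_mult)
qed (simp add: p_MU_eq_log_card_answers log_def)

theorem lemma21:
  fixes I :: "'i set" and L :: "('i \<Rightarrow> 'o) set"
  assumes "finite I"
  shows "arbitrage_free I L (p_MU I)"
  unfolding arbitrage_free_def
  using p_MU_mono[OF assms] p_MU_subadditive[OF assms] by blast

end
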